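(* Let $\mathcal V_{r_p}=\{\bm v_1,\ldots,\bm v_{r_p}\}\subset\mathbb R^q$ be the UD skeleton, and let $\mathcal K$ be a reproducing kernel on $[0,1]^q\times[0,1]^q$. Suppose $f:[0,1]^q\to\mathbb R$ has bounded generalized variation $V_2(f,\mathcal K)<\infty$, and define $\phi_f(\bm x)=f(\mathcal T(\bm x))=f\bigl(T_{\bm Z}(\Pi_q(\bm x))\bigr)$ for $\bm x\in\mathbb R^p$. Assume moreover that $\varphi_f(\bm z)=f(T_{\bm Z}(\bm z))$, $\bm z\in\mathbb R^q$, is Lipschitz on $\mathcal Z\cup\mathcal V_{r_p}$ with constant $L_f$, i.e. $|\varphi_f(\bm z)-\varphi_f(\bm z')|\le L_f\|\bm z-\bm z'\|_2$ for all $\bm z,\bm z'\in\mathcal Z\cup\mathcal V_{r_p}$. Then for each $g\in\{0,1\}$, \[ \left|\int \phi_f\,dP_{n,\bm X}-\int\phi_f\,dP_{\mathcal S_g,\bm X}\right|\le D(\mathcal V_{r_p};\mathcal Z,\mathcal K)\,V_2(f,\mathcal K)+L_f\,\delta_g^{(\mathrm{rot})}, \] and consequently \[ \left|\int \phi_f\,dP_{n,\bm X}-\int\phi_f\,dP_{\mathcal S,\bm X}\right|\le D(\mathcal V_{r_p};\mathcal Z,\mathcal K)\,V_2(f,\mathcal K)+\frac{L_f}{2}\bigl(\delta_1^{(\mathrm{rot})}+\delta_0^{(\mathrm{rot})}\bigr). \]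
   Context: Data: $(Y_i,W_i,\bm X_i)$, $i=1,\ldots,n$, with $Y_i\in\mathbb R$, $W_i\in\{0,1\}$, $\bm X_i\in\mathbb R^p$; both treatment arms are nonempty. Let $\bar{\bm X}=n^{-1}\sum_i\bm X_i$, $\widehat{\bm D}$ the diagonal matrix of (positive) sample standard deviations of the $p$ coordinates, $\widetilde{\bm X}_i=\widehat{\bm D}^{-1}(\bm X_i-\bar{\bm X})$, and $\widetilde{\bm X}=\bm U\bm\Sigma\bm V^\top$ the SVD of the $n\times p$ matrix with rows $\widetilde{\bm X}_i^\top$, singular values in decreasing order. For a chosen $q\le p$, $\bm V_q$ is the matrix of the first $q$ columns of $\bm V$, $\Pi_q(\bm x)=\bm V_q^\top\widehat{\bm D}^{-1}(\bm x-\bar{\bm X})$, $\bm Z_i=\Pi_q(\bm X_i)$, $\mathcal Z=\{\bm Z_1,\ldots,\bm Z_n\}$. For $d=1,\ldots,q$, $\widehat F_{Z^{(d)}}$ is the empirical CDF of $\{Z_i^{(d)}\}_{i=1}^n$, $T_{\bm Z}(\bm z)=(\widehat F_{Z^{(1)}}(z^{(1)}),\ldots,\widehat F_{Z^{(q)}}(z^{(q)}))^\top\in[0,1]^q$, and $\mathcal T(\bm x)=T_{\bm Z}(\Pi_q(\bm x))$. The UD skeleton is a set $\mathcal V_{r_p}=\{\bm v_j\}_{j=1}^{r_p}\subset\mathbb R^q$, obtained as $\bm v_j=(\widehat F^{-1}_{Z^{(1)}}(u_{j1}),\ldots,\widehat F^{-1}_{Z^{(q)}}(u_{jq}))^\top$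 from a design $\{\bm u_j\}\subset[0,1]^q$. For $g\in\{0,1\}$ and each $j$, $i_j^g\in\arg\min_{i:W_i=g}\|\bm Z_i-\bm v_j\|_2$; $\mathcal S_g=\{i_j^g\}_{j=1}^{r_p}$, $\mathcal S=\mathcal S_1\cup\mathcal S_0$, and $\delta_g^{(\mathrm{rot})}=\max_{1\le j\le r_p}\|\bm Z_{i_j^g}-\bm v_j\|_2$. Empirical measures: $P_{n,\bm X}=n^{-1}\sum_{i=1}^n\delta_{\bm X_i}$, $P_{\mathcal S_g,\bm X}=r_p^{-1}\sum_{j=1}^{r_p}\delta_{\bm X_{i_j^g}}$, $P_{\mathcal S,\bm X}=\tfrac12P_{\mathcal S_1,\bm X}+\tfrac12P_{\mathcal S_0,\bm X}$. Generalized empirical $F$-discrepancy: for a finite $\mathcal P=\{\bm\xi_1,\ldots,\bm\xi_m\}\subset\mathbb R^q$, $D(\mathcal P;\mathcal Z,\mathcal K)\ge0$ is defined by $D^2=\frac1{n^2}\sum_{i,i'}\mathcal K(T_{\bm Z}(\bm Z_i),T_{\bm Z}(\bm Z_{i'}))-\frac{2}{nm}\sum_{i,k}\mathcal K(T_{\bm Z}(\bm Z_i),T_{\bm Z}(\bm\xi_k))+\frac1{m^2}\sum_{k,k'}\mathcal K(T_{\bm Z}(\bm\xi_k),T_{\bm Z}(\bm\xi_{k'}))$. $V_2(f,\mathcal K)\in[0,\infty]$ denotes the generalized (Hickernell) variation of $f$ with respect to $\mathcal K$; it satisfies the empirical Koksma–Hlawka inequality: for every finite $\mathcal P=\{\bm\xi_k\}_{k=1}^m\subset\mathbb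 R^q$, $\bigl|n^{-1}\sum_i f(T_{\bm Z}(\bm Z_i))-m^{-1}\sum_k f(T_{\bm Z}(\bm\xi_k))\bigr|\le D(\mathcal P;\mathcal Z,\mathcal K)V_2(f,\mathcal K)$. *)

theory Defs
  imports Complex_Main
begin

text \<open>Conventions: data indices i < n, covariate coordinates j < p, projected
coordinates d < q, skeleton indices j < r.  Points of R^p and R^q are functions
nat => real; constructed points of R^q are set to 0 outside the coordinates d < q.\<close>

definition mean_vec :: "nat \<Rightarrow> (nat \<Rightarrow> nat \<Rightarrow> real) \<Rightarrow> nat \<Rightarrow> real" where
  "mean_vec n X = (\<lambda>j. (\<Sum>i<n. X i j) / real n)"

definition sd_vec :: "nat \<Rightarrow> (nat \<Rightarrow> nat \<Rightarrow> real) \<Rightarrow> nat \<Rightarrow> real" where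
  "sd_vec n X = (\<lambda>j. sqrt ((\<Sum>i<n. (X i j - mean_vec n X j)^2) / (real n - 1)))"

definition standardize :: "nat \<Rightarrow> (nat \<Rightarrow> nat \<Rightarrow> real) \<Rightarrow> (nat \<Rightarrow> real) \<Rightarrow> nat \<Rightarrow> real" where
  "standardize n X x = (\<lambda>j. (x j - mean_vec n X j) / sd_vec n X j)"

definition is_svd :: "nat \<Rightarrow> nat \<Rightarrow> (nat \<Rightarrow> nat \<Rightarrow> real) \<Rightarrow> (nat \<Rightarrow> nat \<Rightarrow> real)
     \<Rightarrow> (nat \<Rightarrow> real) \<Rightarrow> (nat \<Rightarrow> nat \<Rightarrow> real) \<Rightarrow> bool" where
  "is_svd n p A U \<sigma> V \<longleftrightarrow>
     (\<forall>k<n. \<forall>l<n. (\<Sum>i<n. U i k * U i l) = (if k = l then 1 else 0)) \<and>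
     (\<forall>k<p. \<forall>l<p. (\<Sum>j<p. V j k * V j l) = (if k = l then 1 else 0)) \<and>
     (\<forall>k<min n p. 0 \<le> \<sigma> k) \<and>
     (\<forall>k l. k \<le> l \<longrightarrow> l < min n p \<longrightarrow> \<sigma> l \<le> \<sigma> k) \<and>
     (\<forall>i<n. \<forall>j<p. A i j = (\<Sum>k<min n p. U i k * \<sigma> k * V j k))"

definition proj_q :: "nat \<Rightarrow> nat \<Rightarrow> nat \<Rightarrow> (nat \<Rightarrow> nat \<Rightarrow> real) \<Rightarrow> (nat \<Rightarrow> nat \<Rightarrow> real)
     \<Rightarrow> (nat \<Rightarrow> real) \<Rightarrow> nat \<Rightarrow> real" where
  "proj_q n p q X V x = (\<lambda>d. if d < q then (\<Sum>j<p. V j d * standardize n X x j) else 0)"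

definition ecdf :: "nat \<Rightarrow> (nat \<Rightarrow> nat \<Rightarrow> real) \<Rightarrow> nat \<Rightarrow> real \<Rightarrow> real" where
  "ecdf n Z d t = real (card {i. i < n \<and> Z i d \<le> t}) / real n"

text \<open>Empirical quantile F^{-1}(u) = smallest sample value t with F(t) >= u
(equals inf {t. F t >= u} for 0 < u <= 1).\<close>
definition ecdf_quantile :: "nat \<Rightarrow> (nat \<Rightarrow> nat \<Rightarrow> real) \<Rightarrow> nat \<Rightarrow> real \<Rightarrow> real" where
  "ecdf_quantile n Z d u = Min {Z i d | i. i < n \<and> u \<le> ecdf n Z d (Z i d)}"

definition Tmap :: "nat \<Rightarrow> nat \<Rightarrow> (nat \<Rightarrow> nat \<Rightarrow> real) \<Rightarrow> (nat \<Rightarrow> real) \<Rightarrow> nat \<Rightarrow> real" where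
  "Tmap q n Z z = (\<lambda>d. if d < q then ecdf n Z d (z d) else 0)"

definition ud_skeleton :: "nat \<Rightarrow> nat \<Rightarrow> (nat \<Rightarrow> nat \<Rightarrow> real) \<Rightarrow> (nat \<Rightarrow> nat \<Rightarrow> real)
     \<Rightarrow> nat \<Rightarrow> nat \<Rightarrow> real" where
  "ud_skeleton q n Z u = (\<lambda>j d. if d < q then ecdf_quantile n Z d (u j d) else 0)"

definition norm2 :: "nat \<Rightarrow> (nat \<Rightarrow> real) \<Rightarrow> real" where
  "norm2 q z = sqrt (\<Sum>d<q. (z d)^2)"

definition unit_cube :: "nat \<Rightarrow> (nat \<Rightarrow> real) set" where
  "unit_cube q = {x. \<forall>d<q. 0 \<le> x d \<and> x d \<le> 1}"

definition reproducing_kernel :: "nat \<Rightarrow> ((nat \<Rightarrow> real) \<Rightarrow> (nat \<Rightarrow> real) \<Rightarrow> real) \<Rightarrow> bool" where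
  "reproducing_kernel q K \<longleftrightarrow>
     (\<forall>x\<in>unit_cube q. \<forall>y\<in>unit_cube q. K x y = K y x) \<and>
     (\<forall>m (c :: nat \<Rightarrow> real) (t :: nat \<Rightarrow> nat \<Rightarrow> real). (\<forall>k<m. t k \<in> unit_cube q) \<longrightarrow>
        0 \<le> (\<Sum>k<m. \<Sum>l<m. c k * c l * K (t k) (t l)))"

definition discrepancy :: "nat \<Rightarrow> nat \<Rightarrow> (nat \<Rightarrow> nat \<Rightarrow> real)
     \<Rightarrow> ((nat \<Rightarrow> real) \<Rightarrow> (nat \<Rightarrow> real) \<Rightarrow> real) \<Rightarrow> nat \<Rightarrow> (nat \<Rightarrow> nat \<Rightarrow> real) \<Rightarrow> real" where
  "discrepancy q n Z K m \<xi> =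
     sqrt ((\<Sum>i<n. \<Sum>i'<n. K (Tmap q n Z (Z i)) (Tmap q n Z (Z i'))) / (real n)^2
         - 2 * (\<Sum>i<n. \<Sum>k<m. K (Tmap q n Z (Z i)) (Tmap q n Z (\<xi> k))) / (real n * real m)
         + (\<Sum>k<m. \<Sum>k'<m. K (Tmap q n Z (\<xi> k)) (Tmap q n Z (\<xi> k'))) / (real m)^2)"

end

theory Submission
  imports Defs
begin

text \<open>Compare both subsample averages with the average over the skeleton. The empirical
measure is within \<open>D(V; Z, K) V\<^sub>2\<close> of the skeleton by the Koksma-Hlawka inequality, and the
subsample of group \<open>g\<close> is within \<open>L \<delta>\<^sub>g\<close> of it, because its \<open>j\<close>-th point lies within
\<open>\<delta>\<^sub>g\<close> of \<open>v\<^sub>j\<close> and \<open>f \<circ> T\<^sub>Z\<close> is \<open>L\<close>-Lipschitz there. The bound for the pooled subsample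
is the average of the two group bounds. Only the Koksma-Hlawka and Lipschitz hypotheses and
\<open>sel g j < n\<close> enter the argument; the remaining hypotheses just describe the setting.\<close>

lemma norm2_nonneg: "0 \<le> norm2 q z"
  unfolding norm2_def by (simp add: sum_nonneg)

text \<open>No sign condition on \<open>L\<close>: if \<open>L < 0\<close> the hypothesis forces every \<open>e j\<close> to vanish.\<close>
lemma abs_le_mult_Max:
  fixes a e :: "nat \<Rightarrow> real"
  assumes bound: "\<forall>j<r. \<bar>a j\<bar> \<le> L * e j" and nonneg: "\<forall>j<r. 0 \<le> e j" and "k < r"
  shows "\<bar>a k\<bar> \<le> L * Max (e ` {..<r})"
proof (cases "0 \<le> L")
  case True
  have "e k \<le> Max (e ` {..<r})" using \<open>k < r\<close> by (intro Max_ge) auto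
  then show ?thesis using bound \<open>k < r\<close> True by (meson mult_left_mono order_trans)
next
  case False
  have vanish: "e j = 0" if "j < r" for j
  proof -
    have "0 \<le> L * e j" using bound that by (meson abs_ge_zero order_trans)
    then show ?thesis using nonneg that False by (simp add: zero_le_mult_iff antisym)
  qed
  then have "e ` {..<r} = {0}" using \<open>k < r\<close> by force
  then show ?thesis using bound \<open>k < r\<close> vanish by simp
qed

lemma abs_mean_diff_le:
  fixes a b :: "nat \<Rightarrow> real"
  assumes "0 < r" and "\<forall>j<r. \<bar>a j - b j\<bar> \<le> c"
  shows "\<bar>(\<Sum>j<r. a j) / real r - (\<Sum>j<r. b j) / real r\<bar> \<le> c"
proof -
  have "\<bar>(\<Sum>j<r. a j) - (\<Sum>j<r. b j)\<bar> \<le> (\<Sum>j<r. \<bar>a j - b j\<bar>)"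
    by (metis sum_abs sum_subtractf)
  also have "\<dots> \<le> real r * c"
    using sum_mono[of "{..<r}" "\<lambda>j. \<bar>a j - b j\<bar>" "\<lambda>_. c"] assms(2) by simp
  finally show ?thesis
    using \<open>0 < r\<close> by (simp add: diff_divide_distrib[symmetric] abs_divide pos_divide_le_eq mult.commute)
qed

lemma abs_mean_diff_le_mult_Max:
  fixes a b e :: "nat \<Rightarrow> real"
  assumes "0 < r" and "\<forall>j<r. \<bar>a j - b j\<bar> \<le> L * e j" and "\<forall>j<r. 0 \<le> e j"
  shows "\<bar>(\<Sum>j<r. a j) / real r - (\<Sum>j<r. b j) / real r\<bar> \<le> L * Max (e ` {..<r})"
  using assms abs_le_mult_Max[of r "\<lambda>j. a j - b j" L e] by (intro abs_mean_diff_le) auto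

lemma abs_diff_le_via:
  fixes a b c :: real
  assumes "\<bar>a - c\<bar> \<le> D" and "\<bar>b - c\<bar> \<le> E"
  shows "\<bar>a - b\<bar> \<le> D + E"
  using assms by linarith

lemma abs_diff_midpoint_le:
  fixes a b c D :: real
  assumes "\<bar>a - b\<bar> \<le> D + L * x" and "\<bar>a - c\<bar> \<le> D + L * y"
  shows "\<bar>a - ((1/2) * b + (1/2) * c)\<bar> \<le> D + (L / 2) * (x + y)"
  using assms unfolding abs_le_iff by (simp add: field_simps)

theorem theorem1:
  fixes n p q r :: nat
    and W :: "nat \<Rightarrow> bool"
    and X :: "nat \<Rightarrow> nat \<Rightarrow> real"
    and U V :: "nat \<Rightarrow> nat \<Rightarrow> real" and \<sigma> :: "nat \<Rightarrow> real"
    and u :: "nat \<Rightarrow> nat \<Rightarrow> real"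
    and sel :: "bool \<Rightarrow> nat \<Rightarrow> nat"
    and K :: "(nat \<Rightarrow> real) \<Rightarrow> (nat \<Rightarrow> real) \<Rightarrow> real"
    and f :: "(nat \<Rightarrow> real) \<Rightarrow> real"
    and V2 L :: real
  defines "Z \<equiv> (\<lambda>i. proj_q n p q X V (X i))"
    and "Tz \<equiv> Tmap q n (\<lambda>i. proj_q n p q X V (X i))"
    and "v \<equiv> ud_skeleton q n (\<lambda>i. proj_q n p q X V (X i)) u"
    and "phi \<equiv> (\<lambda>x. f (Tmap q n (\<lambda>i. proj_q n p q X V (X i)) (proj_q n p q X V x)))"
    and "delta \<equiv> (\<lambda>g. Max ((\<lambda>j. norm2 q (proj_q n p q X V (X (sel g j))
               - ud_skeleton q n (\<lambda>i. proj_q n p q X V (X i)) u j)) ` {..<r}))"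
  assumes treated: "\<exists>i<n. W i" and control: "\<exists>i<n. \<not> W i"
    and sd_pos: "\<forall>j<p. 0 < sd_vec n X j"
    and svd: "is_svd n p (\<lambda>i j. standardize n X (X i) j) U \<sigma> V"
    and q_le: "1 \<le> q" "q \<le> p"
    and r_pos: "1 \<le> r"
    and design: "\<forall>j<r. \<forall>d<q. 0 \<le> u j d \<and> u j d \<le> 1"
    and nn: "\<forall>g j. j < r \<longrightarrow> sel g j < n \<and> W (sel g j) = g \<and>
               (\<forall>i<n. W i = g \<longrightarrow> norm2 q (Z (sel g j) - v j) \<le> norm2 q (Z i - v j))"
    and kernel: "reproducing_kernel q K"
    and V2_fin: "0 \<le> V2"
    and KH: "\<forall>m (\<xi> :: nat \<Rightarrow> nat \<Rightarrow> real). 0 < m \<longrightarrow>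
               \<bar>(\<Sum>i<n. f (Tz (Z i))) / real n - (\<Sum>k<m. f (Tz (\<xi> k))) / real m\<bar>
                 \<le> discrepancy q n Z K m \<xi> * V2"
    and lipschitz: "\<forall>z\<in>Z ` {..<n} \<union> v ` {..<r}. \<forall>z'\<in>Z ` {..<n} \<union> v ` {..<r}.
               \<bar>f (Tz z) - f (Tz z')\<bar> \<le> L * norm2 q (z - z')"
  shows "(\<forall>g. \<bar>(\<Sum>i<n. phi (X i)) / real n - (\<Sum>j<r. phi (X (sel g j))) / real r\<bar>
              \<le> discrepancy q n Z K r v * V2 + L * delta g)
       \<and> \<bar>(\<Sum>i<n. phi (X i)) / real n
           - ((1/2) * ((\<Sum>j<r. phi (X (sel True j))) / real r)
              + (1/2) * ((\<Sum>j<r. phi (X (sel False j))) / real r))\<bar>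
          \<le> discrepancy q n Z K r v * V2 + (L / 2) * (delta True + delta False)"
proof -
  have phi_X: "phi (X i) = f (Tz (Z i))" for i
    unfolding phi_def Tz_def Z_def by simp
  have delta_eq: "delta g = Max ((\<lambda>j. norm2 q (Z (sel g j) - v j)) ` {..<r})" for g
    unfolding delta_def Z_def v_def by simp
  have skeleton: "\<bar>(\<Sum>i<n. phi (X i)) / real n - (\<Sum>j<r. f (Tz (v j))) / real r\<bar>
      \<le> discrepancy q n Z K r v * V2"
    using KH r_pos by (simp add: phi_X)
  have lip: "\<bar>phi (X (sel g j)) - f (Tz (v j))\<bar> \<le> L * norm2 q (Z (sel g j) - v j)"
    if "j < r" for g j
  proof -
    have "Z (sel g j) \<in> Z ` {..<n} \<union> v ` {..<r}" and "v j \<in> Z ` {..<n} \<union> v ` {..<r}"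
      using nn that by auto
    then show ?thesis unfolding phi_X using lipschitz by blast
  qed
  have matched: "\<bar>(\<Sum>j<r. phi (X (sel g j))) / real r - (\<Sum>j<r. f (Tz (v j))) / real r\<bar>
      \<le> L * delta g" for g
    unfolding delta_eq using r_pos lip norm2_nonneg by (intro abs_mean_diff_le_mult_Max) auto
  have group: "\<bar>(\<Sum>i<n. phi (X i)) / real n - (\<Sum>j<r. phi (X (sel g j))) / real r\<bar>
      \<le> discrepancy q n Z K r v * V2 + L * delta g" for g
    by (rule abs_diff_le_via[OF skeleton matched])
  show ?thesis
    using group abs_diff_midpoint_le[OF group[of True] group[of False]] by blast
qed

end
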